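(* Let $k\ge3$. Let $C$ and $C'$ be cycles of length $2k$ with $E(C)\cap E(C')=\emptyset$ and $V(C)\cap V(C')\neq\emptyset$. If $H:=C\cup C'$ has girth at least $2k-2$, then $H$ can be decomposed into two paths, each of length $2k$.
   Context: Graphs are finite and simple; length = number of edges; girth = length of a shortest cycle. A decomposition of a graph is a set of subgraphs whose edge sets partition its edge set. *)

theory Defs
  imports Main
begin

text \<open>Finite simple graphs without isolated vertices are represented by their edge sets:
  an edge is a 2-element set of vertices. The vertex set of such a graph is the union of its edges.\<close>

definition verts :: "'a set set \<Rightarrow> 'a set" where
  "verts E = \<Union>E"

definition path_edges :: "'a list \<Rightarrow> 'a set set" where
  "path_edges xs = {{xs ! i, xs ! Suc i} | i. Suc i < length xs}"

definition cycle_edges :: "'a list \<Rightarrow> 'a set set" where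
  "cycle_edges xs = {{xs ! i, xs ! ((Suc i) mod length xs)} | i. i < length xs}"

definition is_path_of_length :: "'a set set \<Rightarrow> nat \<Rightarrow> bool" where
  "is_path_of_length P n \<longleftrightarrow>
     (\<exists>xs. distinct xs \<and> length xs = Suc n \<and> P = path_edges xs)"

definition is_cycle_of_length :: "'a set set \<Rightarrow> nat \<Rightarrow> bool" where
  "is_cycle_of_length C n \<longleftrightarrow>
     (n \<ge> 3 \<and> (\<exists>xs. distinct xs \<and> length xs = n \<and> C = cycle_edges xs))"

text \<open>Girth at least g: every cycle contained in the graph has length at least g
  (vacuous for forests, whose girth is infinite).\<close>
definition girth_at_least :: "'a set set \<Rightarrow> nat \<Rightarrow> bool" where
  "girth_at_least E g \<longleftrightarrow>
     (\<forall>C n. C \<subseteq> E \<and> is_cycle_of_length C n \<longrightarrow> g \<le> n)"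

definition decomposes_into_two_paths :: "'a set set \<Rightarrow> nat \<Rightarrow> bool" where
  "decomposes_into_two_paths E n \<longleftrightarrow>
     (\<exists>P1 P2. P1 \<union> P2 = E \<and> P1 \<inter> P2 = {} \<and>
        is_path_of_length P1 n \<and> is_path_of_length P2 n)"

end

theory Submission
  imports Defs
begin

text \<open>Pick a common vertex v and list the cycles as v c \<dots> v and v d \<dots> v, where the
  neighbour c of v on C avoids C' and the neighbour d of v on C' avoids C. Then swapping the
  edges vc and vd turns C and C' into the two paths c \<dots> v d and d \<dots> v c of length 2k.
  Such neighbours exist by the girth condition: a neighbour a of v on C that lies on C' spans a
  chord va of C', which closes cycles of lengths j + 1 and 2k - j + 1 with C', where j is the
  distance from v to a along C'. Both are at least 2k - 2, which forces j = 3 (and k = 3); so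
  the two neighbours of v on C cannot both lie on C', as they would both be the vertex
  at distance 3 from v in the same direction along C'.\<close>

lemma path_edges_Nil [simp]: "path_edges [] = {}"
  by (simp add: path_edges_def)

lemma path_edges_singleton [simp]: "path_edges [x] = {}"
  by (simp add: path_edges_def)

lemma path_edges_conv_image: "path_edges xs = (\<lambda>i. {xs ! i, xs ! Suc i}) ` {..<length xs - 1}"
  unfolding path_edges_def by auto

lemma path_edges_Cons_Cons [simp]:
  "path_edges (x # y # zs) = insert {x, y} (path_edges (y # zs))"
  unfolding path_edges_conv_image by (simp add: lessThan_Suc_eq_insert_0 image_image)

lemma path_edges_snoc:
  "xs \<noteq> [] \<Longrightarrow> path_edges (xs @ [y]) = insert {last xs, y} (path_edges xs)"
  by (induction xs rule: induct_list012) (auto simp: insert_commute)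

lemma path_edges_rev [simp]: "path_edges (rev xs) = path_edges xs"
proof (induction xs rule: induct_list012)
  case (3 x y zs)
  have "path_edges (rev (y # zs) @ [x]) = insert {y, x} (path_edges (rev (y # zs)))"
    by (subst path_edges_snoc) auto
  then show ?case
    using "3.IH"(2) by (simp add: insert_commute doubleton_eq_iff)
qed auto

lemma path_edges_take_subset: "path_edges (take n xs) \<subseteq> path_edges xs"
  unfolding path_edges_def by force

lemma verts_path_edges: "2 \<le> length xs \<Longrightarrow> verts (path_edges xs) = set xs"
proof (induction xs rule: induct_list012)
  case (3 x y zs)
  then show ?case
    by (cases zs) (auto simp: verts_def)
qed auto

lemma cycle_edges_eq_path_edges: "cycle_edges (x # xs) = path_edges (x # xs @ [x])"
proof -
  let ?c = "x # xs" and ?p = "x # xs @ [x]"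
  have edge: "{?c ! i, ?c ! (Suc i mod length ?c)} = {?p ! i, ?p ! Suc i}"
    if "i < length ?c" for i
  proof (cases "Suc i < length ?c")
    case True
    then show ?thesis by (cases i) (simp_all add: nth_append)
  next
    case False
    with that have "Suc i = length ?c" by simp
    then show ?thesis by (simp add: nth_append nth_Cons')
  qed
  have "cycle_edges ?c = (\<lambda>i. {?c ! i, ?c ! (Suc i mod length ?c)}) ` {..<length ?c}"
    unfolding cycle_edges_def by auto
  also have "\<dots> = (\<lambda>i. {?p ! i, ?p ! Suc i}) ` {..<length ?c}"
    using edge by (intro image_cong) auto
  also have "\<dots> = path_edges ?p"
    unfolding path_edges_def by auto
  finally show ?thesis .
qed

lemma cycle_edges_Cons_Cons:
  "cycle_edges (v # c # r) = insert {v, c} (path_edges (c # r @ [v]))"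
  by (simp add: cycle_edges_eq_path_edges)

lemma cycle_edges_rotate1 [simp]: "cycle_edges (rotate1 xs) = cycle_edges xs"
proof (cases xs)
  case (Cons x ys)
  then show ?thesis
  proof (cases ys)
    case (Cons y zs)
    have "cycle_edges (rotate1 xs) = path_edges ((y # zs @ [x]) @ [y])"
      using \<open>xs = x # ys\<close> Cons by (simp add: cycle_edges_eq_path_edges)
    also have "\<dots> = cycle_edges xs"
      using \<open>xs = x # ys\<close> Cons by (subst path_edges_snoc) (auto simp: cycle_edges_eq_path_edges)
    finally show ?thesis .
  qed simp
qed simp

lemma cycle_edges_rotate [simp]: "cycle_edges (rotate n xs) = cycle_edges xs"
  by (induction n) simp_all

lemma cycle_edges_rev_tail: "cycle_edges (v # rev t) = cycle_edges (v # t)"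
proof -
  have "v # rev t @ [v] = rev (v # t @ [v])" by simp
  then show ?thesis
    by (simp only: cycle_edges_eq_path_edges path_edges_rev)
qed

lemma verts_cycle_edges: "xs \<noteq> [] \<Longrightarrow> verts (cycle_edges xs) = set xs"
  by (cases xs) (simp_all add: cycle_edges_eq_path_edges verts_path_edges)

lemma path_edges_subset_cycle_edges: "path_edges xs \<subseteq> cycle_edges xs"
proof (cases xs)
  case (Cons v t)
  then have "path_edges xs = path_edges (take (length xs) (v # t @ [v]))" by simp
  also have "\<dots> \<subseteq> cycle_edges xs"
    using Cons path_edges_take_subset[of "length xs" "v # t @ [v]"]
    by (simp add: cycle_edges_eq_path_edges)
  finally show ?thesis .
qed simp

lemma end_edge_notin_path_edges:
  assumes "distinct xs" and "2 < length xs"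
  shows "{hd xs, last xs} \<notin> path_edges xs"
proof -
  obtain x y zs where xs: "xs = x # y # zs" and "zs \<noteq> []"
    using assms(2) by (cases xs; cases "tl xs"; cases "tl (tl xs)") auto
  then have "last xs \<noteq> y" and "last xs \<in> set (y # zs)"
    using assms(1) by (auto simp: last_in_set)
  moreover have "x \<notin> verts (path_edges (y # zs))"
    using assms(1) \<open>zs \<noteq> []\<close> by (subst verts_path_edges) (auto simp: xs Suc_le_eq)
  ultimately show ?thesis
    by (auto simp: xs verts_def doubleton_eq_iff)
qed

lemma ex_rotate_to_front: "v \<in> set xs \<Longrightarrow> \<exists>n t. rotate n xs = v # t"
proof -
  assume "v \<in> set xs"
  then obtain i where i: "i < length xs" "xs ! i = v"
    by (auto simp: in_set_conv_nth)
  then have "rotate i xs = v # drop (Suc i) xs @ take i xs"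
    using Cons_nth_drop_Suc[of i xs] by (simp add: rotate_drop_take)
  then show ?thesis by blast
qed

text \<open>A chord from v to the vertex t ! i of the cycle v # t closes the shorter cycle
  v, t ! 0, \<dots>, t ! i.\<close>

lemma girth_le_chord_cycle:
  assumes "distinct (v # t)" and "i < length t"
    and "{v, t ! i} \<in> E" and "{v, t ! i} \<notin> cycle_edges (v # t)"
    and "cycle_edges (v # t) \<subseteq> E" and "girth_at_least E g"
  shows "g \<le> i + 2"
proof -
  define zs where "zs = v # take (Suc i) t"
  have "i \<noteq> 0"
  proof
    assume "i = 0"
    then obtain t' where "t = t ! 0 # t'"
      using assms(2) by (cases t) auto
    then show False
      using assms(4) \<open>i = 0\<close> by (metis cycle_edges_Cons_Cons insertI1)
  qed
  have "last zs = t ! i"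
    using assms(2) by (auto simp: zs_def last_conv_nth)
  have "cycle_edges zs = path_edges (zs @ [v])"
    by (simp add: zs_def cycle_edges_eq_path_edges del: path_edges_Cons_Cons)
  also have "\<dots> = insert {v, t ! i} (path_edges zs)"
    using path_edges_snoc[of zs v] \<open>last zs = t ! i\<close> by (simp add: zs_def insert_commute)
  finally have "cycle_edges zs = insert {v, t ! i} (path_edges zs)" .
  moreover have "path_edges zs \<subseteq> cycle_edges (v # t)"
    using path_edges_take_subset[of "Suc (Suc i)" "v # t"] path_edges_subset_cycle_edges
    by (auto simp: zs_def)
  ultimately have "cycle_edges zs \<subseteq> E"
    using assms(3,5) by auto
  moreover have "distinct zs" and "length zs = i + 2"
    using assms(1,2) by (auto simp: zs_def dest: in_set_takeD)
  then have "is_cycle_of_length (cycle_edges zs) (i + 2)"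
    unfolding is_cycle_of_length_def using \<open>i \<noteq> 0\<close> by auto
  ultimately show ?thesis
    using assms(6) unfolding girth_at_least_def by blast
qed

text \<open>Reading the cycle in both directions gives chord cycles of lengths i + 2 and
  2k - i, both at least 2k - 2.\<close>

lemma chord_at_distance_three:
  assumes "k \<ge> 3" and "distinct (v # t)" and "length t = 2 * k - 1" and "i < length t"
    and "{v, t ! i} \<in> E" and "{v, t ! i} \<notin> cycle_edges (v # t)"
    and "cycle_edges (v # t) \<subseteq> E" and "girth_at_least E (2 * k - 2)"
  shows "i = 2"
proof -
  have "2 * k - 2 \<le> i + 2"
    using girth_le_chord_cycle assms(2,4-8) .
  moreover have "rev t ! (length t - Suc i) = t ! i"
    using assms(4) by (simp add: rev_nth)
  then have "2 * k - 2 \<le> (length t - Suc i) + 2"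
    using girth_le_chord_cycle[of v "rev t" "length t - Suc i" E "2 * k - 2"]
      assms(2,4-8) by (simp add: cycle_edges_rev_tail)
  ultimately show ?thesis
    using assms(1,3,4) by linarith
qed

lemma unique_chord_endpoint:
  assumes "k \<ge> 3" and "distinct ys" and "length ys = 2 * k" and "v \<in> set ys"
    and "cycle_edges ys \<subseteq> E" and "girth_at_least E (2 * k - 2)"
    and "a \<in> set ys" "a \<noteq> v" "{v, a} \<in> E - cycle_edges ys"
    and "b \<in> set ys" "b \<noteq> v" "{v, b} \<in> E - cycle_edges ys"
  shows "a = b"
proof -
  obtain n t where t: "rotate n ys = v # t"
    using ex_rotate_to_front assms(4) by metis
  have t_props: "distinct (v # t)" "length t = 2 * k - 1"
      "set ys = set (v # t)" "cycle_edges ys = cycle_edges (v # t)"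
    using assms(2,3) t by (metis distinct_rotate, metis length_rotate length_Cons diff_Suc_1,
        metis set_rotate, metis cycle_edges_rotate)
  have "x = t ! 2"
    if x: "x \<in> set ys" "x \<noteq> v" "{v, x} \<in> E - cycle_edges ys" for x
  proof -
    obtain i where "i < length t" "x = t ! i"
      using x(1,2) t_props(3) by (auto simp: in_set_conv_nth)
    then show ?thesis
      using chord_at_distance_three[of k v t i E] assms(1,5,6) x(3) t_props by auto
  qed
  then show ?thesis
    using assms(7-12) by metis
qed

lemma ex_listing_with_neighbour_off_other_cycle:
  assumes "k \<ge> 3" and "distinct xs" "length xs = 2 * k"
    and "distinct ys" "length ys = 2 * k" and "v \<in> set xs" "v \<in> set ys"
    and "cycle_edges xs \<inter> cycle_edges ys = {}"
    and "girth_at_least (cycle_edges xs \<union> cycle_edges ys) (2 * k - 2)"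
  shows "\<exists>c r. distinct (v # c # r) \<and> length r = 2 * k - 2 \<and> set (v # c # r) = set xs
      \<and> cycle_edges (v # c # r) = cycle_edges xs \<and> c \<notin> set ys"
proof -
  let ?E = "cycle_edges xs \<union> cycle_edges ys"
  obtain n r where rot: "rotate n xs = v # r"
    using ex_rotate_to_front assms(6) by metis
  have dist: "distinct (v # r)" and len: "length r = 2 * k - 1"
    and set_r: "set (v # r) = set xs" and edges_r: "cycle_edges (v # r) = cycle_edges xs"
    using rot assms(2,3) by (metis distinct_rotate, metis length_rotate length_Cons diff_Suc_1,
        metis set_rotate, metis cycle_edges_rotate)
  obtain a r' where a: "r = a # r'"
    using len assms(1) by (cases r) auto
  obtain b r'' where b: "rev r = b # r''"
    using len assms(1) by (cases "rev r") auto
  have "a \<noteq> b"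
    using dist len assms(1) a b by (cases r' rule: rev_cases) auto
  have edges_rev: "cycle_edges (v # b # r'') = cycle_edges xs"
    using edges_r b by (metis cycle_edges_rev_tail)
  have neighbour: "{v, x} \<in> ?E - cycle_edges ys" "x \<noteq> v"
    if "cycle_edges (v # x # q) = cycle_edges xs" "distinct (v # x # q)" for x q
    using that assms(8) by (auto simp: cycle_edges_Cons_Cons)
  have "distinct (v # b # r'')"
    using dist b by (metis distinct.simps(2) distinct_rev set_rev)
  then have "a \<notin> set ys \<or> b \<notin> set ys"
    using unique_chord_endpoint[OF assms(1,4,5,7) _ assms(9)] neighbour[of a r'] neighbour[of b r'']
      edges_r dist a edges_rev \<open>a \<noteq> b\<close> by blast
  moreover have "set (v # b # r'') = set xs"
    using set_r b by (metis set_rev list.simps(15))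
  moreover have "length r'' = 2 * k - 2" and "length r' = 2 * k - 2"
    using len a b by (metis length_rev length_Cons diff_Suc_1 diff_diff_left one_add_one)+
  ultimately show ?thesis
    using dist set_r edges_r a edges_rev \<open>distinct (v # b # r'')\<close> by blast
qed

lemma decomposes_by_swapping_edges:
  assumes "distinct (v # c # r)" and "distinct (v # d # s)"
    and "r \<noteq> []" and "length s = length r"
    and "c \<notin> set (v # d # s)" and "d \<notin> set (v # c # r)"
    and "cycle_edges (v # c # r) \<inter> cycle_edges (v # d # s) = {}"
  shows "decomposes_into_two_paths (cycle_edges (v # c # r) \<union> cycle_edges (v # d # s))
      (length r + 2)"
proof -
  define A where "A = path_edges (c # r @ [v])"
  define B where "B = path_edges (d # s @ [v])"
  have C: "cycle_edges (v # c # r) = insert {v, c} A"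
    and C': "cycle_edges (v # d # s) = insert {v, d} B"
    by (simp_all add: A_def B_def cycle_edges_Cons_Cons)
  have P: "path_edges (c # r @ [v, d]) = insert {v, d} A"
    using path_edges_snoc[of "c # r @ [v]" d] by (simp add: A_def)
  have P': "path_edges (d # s @ [v, c]) = insert {v, c} B"
    using path_edges_snoc[of "d # s @ [v]" c] by (simp add: B_def)
  have "{c, v} \<notin> A" and "{d, v} \<notin> B"
    using end_edge_notin_path_edges[of "c # r @ [v]"] end_edge_notin_path_edges[of "d # s @ [v]"]
      assms(1-4) by (auto simp: A_def B_def)
  then have "{v, c} \<notin> A" and "{v, d} \<notin> B"
    by (simp_all add: insert_commute)
  moreover have "{v, c} \<noteq> {v, d}"
    using assms(5) by (auto simp: doubleton_eq_iff)
  ultimately have "insert {v, d} A \<inter> insert {v, c} B = {}"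
    using assms(7) unfolding C C' by blast
  moreover have "is_path_of_length (path_edges (c # r @ [v, d])) (length r + 2)"
    unfolding is_path_of_length_def using assms(1,6) by (intro exI[of _ "c # r @ [v, d]"]) auto
  moreover have "is_path_of_length (path_edges (d # s @ [v, c])) (length r + 2)"
    unfolding is_path_of_length_def using assms(2,4,5) by (intro exI[of _ "d # s @ [v, c]"]) auto
  ultimately show ?thesis
    unfolding decomposes_into_two_paths_def P P' C C'
    by (intro exI[of _ "insert {v, d} A"] exI[of _ "insert {v, c} B"]) auto
qed

theorem mainTheorem10:
  fixes C C' :: "'a set set" and k :: nat
  assumes "k \<ge> 3"
    and "is_cycle_of_length C (2 * k)"
    and "is_cycle_of_length C' (2 * k)"
    and "C \<inter> C' = {}"
    and "verts C \<inter> verts C' \<noteq> {}"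
    and "girth_at_least (C \<union> C') (2 * k - 2)"
  shows "decomposes_into_two_paths (C \<union> C') (2 * k)"
proof -
  obtain xs ys where xs: "distinct xs" "length xs = 2 * k" "C = cycle_edges xs"
    and ys: "distinct ys" "length ys = 2 * k" "C' = cycle_edges ys"
    using assms(2,3) unfolding is_cycle_of_length_def by blast
  have disj: "cycle_edges xs \<inter> cycle_edges ys = {}" "cycle_edges ys \<inter> cycle_edges xs = {}"
    and girth: "girth_at_least (cycle_edges xs \<union> cycle_edges ys) (2 * k - 2)"
      "girth_at_least (cycle_edges ys \<union> cycle_edges xs) (2 * k - 2)"
    using assms(4,6) by (auto simp: xs(3) ys(3) Un_commute)
  have "xs \<noteq> []" and "ys \<noteq> []"
    using xs(2) ys(2) assms(1) by auto
  then obtain v where v: "v \<in> set xs" "v \<in> set ys"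
    using assms(5) by (auto simp: xs(3) ys(3) verts_cycle_edges)
  obtain c r where cr: "distinct (v # c # r)" "length r = 2 * k - 2" "set (v # c # r) = set xs"
      "cycle_edges (v # c # r) = C" "c \<notin> set ys"
    using ex_listing_with_neighbour_off_other_cycle[OF assms(1) xs(1,2) ys(1,2) v disj(1) girth(1)]
    unfolding xs(3) by blast
  obtain d s where ds: "distinct (v # d # s)" "length s = 2 * k - 2" "set (v # d # s) = set ys"
      "cycle_edges (v # d # s) = C'" "d \<notin> set xs"
    using ex_listing_with_neighbour_off_other_cycle[OF assms(1) ys(1,2) xs(1,2) v(2,1) disj(2) girth(2)]
    unfolding ys(3) by blast
  have "r \<noteq> []" and "length r + 2 = 2 * k"
    using cr(2) assms(1) by auto
  moreover have "c \<notin> set (v # d # s)" and "d \<notin> set (v # c # r)"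
    using cr(3,5) ds(3,5) by simp_all
  ultimately show ?thesis
    using decomposes_by_swapping_edges[of v c r d s] cr(1,2,4) ds(1,2,4) assms(4) by simp
qed

end
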